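(* Let $\Sigma$ be a rational fan and $f\in\mathrm{PL}(\Sigma)$. Then $[e^f]=1$ in $\underline{\mathrm{PE}}(\Sigma)$ if and only if $f\in\mathrm{L}(\Sigma)$.
   Context: $N$ is a free abelian group of rank $n$, $N_\mathbb{R}=N\otimes_\mathbb{Z}\mathbb{R}$, $M=\mathrm{Hom}_\mathbb{Z}(N,\mathbb{Z})$; elements of $M$ are viewed as integral linear functions $N_\mathbb{R}\to\mathbb{R}$. A rational fan is a finite collection of rational polyhedral cones in $N_\mathbb{R}$, closed under faces, with pairwise intersections faces of both; $|\Sigma|$ is its support. $\mathrm{PL}(\Sigma)$ is the group of functions $f:|\Sigma|\to\mathbb{R}$ such that for every cone $\sigma\in\Sigma$ there is $m\in M$ with $f|_\sigma=m|_\sigma$; $\mathrm{L}(\Sigma)\subseteq\mathrm{PL}(\Sigma)$ is the subgroup of restrictions $m|_{|\Sigma|}$, $m\in M$. $\mathrm{PE}(\Sigma)$ is the subring of the ring of real-valued functions on $|\Sigma|$ generated by the $e^f$, $f\in\mathrm{PL}(\Sigma)$, and $\underline{\mathrm{PE}}(\Sigma)=\mathrm{PE}(\Sigma)/\langle e^\ell-1\mid \ell\in\mathrm{L}(\Sigma)\rangle$. *)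

theory Defs
  imports "HOL-Analysis.Analysis"
begin

text \<open>N = Z^n inside N_R = real^'n (rank n = CARD('n)); M = Hom(N,Z) is identified with
  integer vectors m, acting by the inner product x \<mapsto> m \<bullet> x.\<close>

definition integral_vec :: "real^'n \<Rightarrow> bool" where
  "integral_vec v \<longleftrightarrow> (\<forall>i. v $ i \<in> \<int>)"

definition rational_polyhedral_cone :: "(real^'n) set \<Rightarrow> bool" where
  "rational_polyhedral_cone \<sigma> \<longleftrightarrow>
     (\<exists>S. finite S \<and> (\<forall>v\<in>S. integral_vec v) \<and> \<sigma> = convex_cone hull S)"

text \<open>Rational fan. Faces of cones are nonempty (they contain 0); the library's face_of
  also counts the empty set as a face, so it is excluded explicitly.\<close>
definition rational_fan :: "(real^'n) set set \<Rightarrow> bool" where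
  "rational_fan \<Sigma> \<longleftrightarrow> finite \<Sigma>
     \<and> (\<forall>\<sigma>\<in>\<Sigma>. rational_polyhedral_cone \<sigma>)
     \<and> (\<forall>\<sigma>\<in>\<Sigma>. \<forall>\<tau>. \<tau> face_of \<sigma> \<and> \<tau> \<noteq> {} \<longrightarrow> \<tau> \<in> \<Sigma>)
     \<and> (\<forall>\<sigma>\<in>\<Sigma>. \<forall>\<tau>\<in>\<Sigma>. (\<sigma> \<inter> \<tau>) face_of \<sigma> \<and> (\<sigma> \<inter> \<tau>) face_of \<tau>)"

definition support :: "(real^'n) set set \<Rightarrow> (real^'n) set" where
  "support \<Sigma> = \<Union>\<Sigma>"

text \<open>A function |Sigma| -> R is represented by any function on real^'n; only its values
  on the support matter.\<close>
definition PL :: "(real^'n) set set \<Rightarrow> (real^'n \<Rightarrow> real) set" where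
  "PL \<Sigma> = {f. \<forall>\<sigma>\<in>\<Sigma>. \<exists>m. integral_vec m \<and> (\<forall>x\<in>\<sigma>. f x = m \<bullet> x)}"

definition L :: "(real^'n) set set \<Rightarrow> (real^'n \<Rightarrow> real) set" where
  "L \<Sigma> = {f. \<exists>m. integral_vec m \<and> (\<forall>x\<in>support \<Sigma>. f x = m \<bullet> x)}"

text \<open>Elements of the ring of real functions on |Sigma| are represented canonically by
  functions on real^'n that vanish outside the support.\<close>
definition restr :: "(real^'n) set set \<Rightarrow> (real^'n \<Rightarrow> real) \<Rightarrow> (real^'n \<Rightarrow> real)" where
  "restr \<Sigma> g = (\<lambda>x. if x \<in> support \<Sigma> then g x else 0)"

definition expfun :: "(real^'n) set set \<Rightarrow> (real^'n \<Rightarrow> real) \<Rightarrow> (real^'n \<Rightarrow> real)" where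
  "expfun \<Sigma> f = restr \<Sigma> (\<lambda>x. exp (f x))"

inductive_set PE :: "(real^'n) set set \<Rightarrow> (real^'n \<Rightarrow> real) set" for \<Sigma> where
  one: "restr \<Sigma> (\<lambda>x. 1) \<in> PE \<Sigma>"
| gen: "f \<in> PL \<Sigma> \<Longrightarrow> expfun \<Sigma> f \<in> PE \<Sigma>"
| add: "a \<in> PE \<Sigma> \<Longrightarrow> b \<in> PE \<Sigma> \<Longrightarrow> (\<lambda>x. a x + b x) \<in> PE \<Sigma>"
| neg: "a \<in> PE \<Sigma> \<Longrightarrow> (\<lambda>x. - a x) \<in> PE \<Sigma>"
| mul: "a \<in> PE \<Sigma> \<Longrightarrow> b \<in> PE \<Sigma> \<Longrightarrow> (\<lambda>x. a x * b x) \<in> PE \<Sigma>"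

inductive_set LIdeal :: "(real^'n) set set \<Rightarrow> (real^'n \<Rightarrow> real) set" for \<Sigma> where
  zero: "(\<lambda>x. 0) \<in> LIdeal \<Sigma>"
| gen: "l \<in> L \<Sigma> \<Longrightarrow> (\<lambda>x. expfun \<Sigma> l x - restr \<Sigma> (\<lambda>x. 1) x) \<in> LIdeal \<Sigma>"
| add: "a \<in> LIdeal \<Sigma> \<Longrightarrow> b \<in> LIdeal \<Sigma> \<Longrightarrow> (\<lambda>x. a x + b x) \<in> LIdeal \<Sigma>"
| mul: "r \<in> PE \<Sigma> \<Longrightarrow> a \<in> LIdeal \<Sigma> \<Longrightarrow> (\<lambda>x. r x * a x) \<in> LIdeal \<Sigma>"

definition class_is_one :: "(real^'n) set set \<Rightarrow> (real^'n \<Rightarrow> real) \<Rightarrow> bool" where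
  "class_is_one \<Sigma> f \<longleftrightarrow> (\<lambda>x. expfun \<Sigma> f x - restr \<Sigma> (\<lambda>x. 1) x) \<in> LIdeal \<Sigma>"

end

theory Submission
  imports Defs
begin

text \<open>Restrict every function to a ray \<open>t \<mapsto> t x\<close> of the support and let \<open>t \<rightarrow> 0\<^sup>+\<close>.
  Every element of \<open>PE(\<Sigma>)\<close> then tends to an integer, since the generators \<open>e\<^sup>f\<close> tend to 1.
  For every element \<open>a\<close> of the ideal, \<open>a(t x)/t\<close> tends to \<open>M \<bullet> x\<close> for one integral \<open>M\<close>
  independent of \<open>x\<close>: for \<open>e\<^sup>\<ell> - 1\<close> this is the derivative of \<open>t \<mapsto> exp (t \<ell>(x))\<close> at 0, and
  multiplying by an element of \<open>PE(\<Sigma>)\<close> scales \<open>M\<close> by an integer. Since \<open>(e\<^sup>f - 1)(t x)/t\<close>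
  tends to \<open>f x\<close>, membership of \<open>e\<^sup>f - 1\<close> in the ideal forces \<open>f = M\<close> on the support.\<close>

definition ray_limit :: "'a::real_vector set \<Rightarrow> ('a \<Rightarrow> real) \<Rightarrow> ('a \<Rightarrow> real) \<Rightarrow> bool" where
  "ray_limit C r h \<longleftrightarrow> (\<forall>x\<in>C. ((\<lambda>t. r (t *\<^sub>R x)) \<longlongrightarrow> h x) (at_right 0))"

definition ray_slope :: "'a::real_vector set \<Rightarrow> ('a \<Rightarrow> real) \<Rightarrow> ('a \<Rightarrow> real) \<Rightarrow> bool" where
  "ray_slope C a h \<longleftrightarrow> (\<forall>x\<in>C. ((\<lambda>t. a (t *\<^sub>R x) / t) \<longlongrightarrow> h x) (at_right 0))"

lemma ray_limit_add:
  "ray_limit C a g \<Longrightarrow> ray_limit C b h \<Longrightarrow> ray_limit C (\<lambda>x. a x + b x) (\<lambda>x. g x + h x)"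
  unfolding ray_limit_def by (auto intro: tendsto_add)

lemma ray_limit_minus: "ray_limit C a g \<Longrightarrow> ray_limit C (\<lambda>x. - a x) (\<lambda>x. - g x)"
  unfolding ray_limit_def by (auto intro: tendsto_minus)

lemma ray_limit_mult:
  "ray_limit C a g \<Longrightarrow> ray_limit C b h \<Longrightarrow> ray_limit C (\<lambda>x. a x * b x) (\<lambda>x. g x * h x)"
  unfolding ray_limit_def by (auto intro: tendsto_mult)

lemma ray_slope_add:
  assumes "ray_slope C a g" "ray_slope C b h"
  shows "ray_slope C (\<lambda>x. a x + b x) (\<lambda>x. g x + h x)"
  using assms unfolding ray_slope_def add_divide_distrib by (auto intro: tendsto_add)

lemma ray_slope_mult:
  assumes "ray_limit C r k" "ray_slope C a h"
  shows "ray_slope C (\<lambda>x. r x * a x) (\<lambda>x. k x * h x)"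
proof -
  have "((\<lambda>t. r (t *\<^sub>R x) * (a (t *\<^sub>R x) / t)) \<longlongrightarrow> k x * h x) (at_right 0)" if "x \<in> C" for x
    using assms that unfolding ray_limit_def ray_slope_def by (intro tendsto_mult) auto
  then show ?thesis
    unfolding ray_slope_def by simp
qed

lemma ray_slope_imp_ray_limit_zero:
  assumes "ray_slope C a h"
  shows "ray_limit C a (\<lambda>_. 0)"
  unfolding ray_limit_def
proof
  fix x assume "x \<in> C"
  then have "((\<lambda>t. t * (a (t *\<^sub>R x) / t)) \<longlongrightarrow> 0 * h x) (at_right 0)"
    using assms unfolding ray_slope_def by (intro tendsto_mult tendsto_ident_at) blast
  moreover have "\<forall>\<^sub>F t in at_right 0. t * (a (t *\<^sub>R x) / t) = a (t *\<^sub>R x)"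
    using eventually_at_right_less by (rule eventually_mono) simp
  ultimately show "((\<lambda>t. a (t *\<^sub>R x)) \<longlongrightarrow> 0) (at_right 0)"
    using tendsto_cong by fastforce
qed

lemma ray_slope_unique:
  assumes "ray_slope C a g" "ray_slope C a h" "x \<in> C"
  shows "g x = h x"
  using assms unfolding ray_slope_def by (meson tendsto_unique trivial_limit_at_right_real)

lemma tendsto_exp_difference_quotient_at_right:
  "((\<lambda>t::real. (exp (t * c) - 1) / t) \<longlongrightarrow> c) (at_right 0)"
proof -
  have "((\<lambda>h::real. (exp ((0 + h) * c) - exp (0 * c)) / h) \<longlongrightarrow> c) (at 0)"
    by (rule DERIV_D) (auto intro!: derivative_eq_intros)
  then show ?thesis
    by (simp add: filterlim_at_split)
qed

lemma conic_rational_polyhedral_cone: "rational_polyhedral_cone \<sigma> \<Longrightarrow> conic \<sigma>"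
  unfolding rational_polyhedral_cone_def by (auto intro: conic_convex_cone_hull)

lemma conic_support: "(\<And>\<sigma>. \<sigma> \<in> \<Sigma> \<Longrightarrow> conic \<sigma>) \<Longrightarrow> conic (support \<Sigma>)"
  unfolding support_def conic_def by blast

lemma L_subset_PL: "L \<Sigma> \<subseteq> PL \<Sigma>"
  unfolding L_def PL_def support_def by blast

lemma PL_positively_homogeneous:
  assumes "\<And>\<sigma>. \<sigma> \<in> \<Sigma> \<Longrightarrow> conic \<sigma>" "f \<in> PL \<Sigma>" "x \<in> support \<Sigma>" "0 \<le> t"
  shows "f (t *\<^sub>R x) = t * f x"
proof -
  obtain \<sigma> where "\<sigma> \<in> \<Sigma>" "x \<in> \<sigma>"
    using assms(3) unfolding support_def by blast
  moreover obtain m where "\<forall>y\<in>\<sigma>. f y = m \<bullet> y"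
    using assms(2) \<open>\<sigma> \<in> \<Sigma>\<close> unfolding PL_def by blast
  ultimately show ?thesis
    using assms(1,4) by (simp add: conic_mul)
qed

lemma ray_limit_restr_one:
  assumes "conic (support \<Sigma>)"
  shows "ray_limit (support \<Sigma>) (restr \<Sigma> (\<lambda>_. 1)) (\<lambda>_. 1)"
  unfolding ray_limit_def
proof
  fix x assume x: "x \<in> support \<Sigma>"
  have "\<forall>\<^sub>F t in at_right 0. restr \<Sigma> (\<lambda>_. 1) (t *\<^sub>R x) = 1"
    using eventually_at_right_less
    by (rule eventually_mono) (simp add: restr_def conic_mul[OF assms x])
  then show "((\<lambda>t. restr \<Sigma> (\<lambda>_. 1) (t *\<^sub>R x)) \<longlongrightarrow> 1) (at_right 0)"
    by (rule tendsto_eventually)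
qed

lemma ray_slope_expfun_minus_one:
  assumes cones: "\<And>\<sigma>. \<sigma> \<in> \<Sigma> \<Longrightarrow> conic \<sigma>" and f: "f \<in> PL \<Sigma>"
  shows "ray_slope (support \<Sigma>) (\<lambda>x. expfun \<Sigma> f x - restr \<Sigma> (\<lambda>_. 1) x) f"
  unfolding ray_slope_def
proof
  fix x assume x: "x \<in> support \<Sigma>"
  have ev: "\<forall>\<^sub>F t in at_right 0. (expfun \<Sigma> f (t *\<^sub>R x) - restr \<Sigma> (\<lambda>_. 1) (t *\<^sub>R x)) / t
      = (exp (t * f x) - 1) / t"
  proof (rule eventually_mono[OF eventually_at_right_less])
    fix t :: real assume "0 < t"
    then have "t *\<^sub>R x \<in> support \<Sigma>" "f (t *\<^sub>R x) = t * f x"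
      using conic_mul[OF conic_support[OF cones] x] PL_positively_homogeneous[OF cones f x] by auto
    then show "(expfun \<Sigma> f (t *\<^sub>R x) - restr \<Sigma> (\<lambda>_. 1) (t *\<^sub>R x)) / t = (exp (t * f x) - 1) / t"
      by (simp add: expfun_def restr_def)
  qed
  show "((\<lambda>t. (expfun \<Sigma> f (t *\<^sub>R x) - restr \<Sigma> (\<lambda>_. 1) (t *\<^sub>R x)) / t) \<longlongrightarrow> f x) (at_right 0)"
    using tendsto_cong[OF ev] tendsto_exp_difference_quotient_at_right by blast
qed

lemma ray_limit_expfun:
  assumes cones: "\<And>\<sigma>. \<sigma> \<in> \<Sigma> \<Longrightarrow> conic \<sigma>" and "f \<in> PL \<Sigma>"
  shows "ray_limit (support \<Sigma>) (expfun \<Sigma> f) (\<lambda>_. 1)"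
  using ray_limit_add[OF ray_limit_restr_one[OF conic_support[OF cones]]
      ray_slope_imp_ray_limit_zero[OF ray_slope_expfun_minus_one[OF assms]]]
  by simp

lemma PE_ray_limit_Ints:
  assumes cones: "\<And>\<sigma>. \<sigma> \<in> \<Sigma> \<Longrightarrow> conic \<sigma>" and "r \<in> PE \<Sigma>"
  shows "\<exists>k\<in>\<int>. ray_limit (support \<Sigma>) r (\<lambda>_. k)"
  using \<open>r \<in> PE \<Sigma>\<close>
proof induction
  case one
  show ?case
    using ray_limit_restr_one[OF conic_support[OF cones]] Ints_1 by blast
next
  case (gen f)
  show ?case
    using ray_limit_expfun[OF cones gen] Ints_1 by blast
next
  case (add a b)
  then obtain k k' where k: "k \<in> \<int>" "ray_limit (support \<Sigma>) a (\<lambda>_. k)"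
    and k': "k' \<in> \<int>" "ray_limit (support \<Sigma>) b (\<lambda>_. k')"
    by blast
  show ?case
    using ray_limit_add[OF k(2) k'(2)] Ints_add[OF k(1) k'(1)] by blast
next
  case (neg a)
  then obtain k where k: "k \<in> \<int>" "ray_limit (support \<Sigma>) a (\<lambda>_. k)"
    by blast
  show ?case
    using ray_limit_minus[OF k(2)] Ints_minus[OF k(1)] by blast
next
  case (mul a b)
  then obtain k k' where k: "k \<in> \<int>" "ray_limit (support \<Sigma>) a (\<lambda>_. k)"
    and k': "k' \<in> \<int>" "ray_limit (support \<Sigma>) b (\<lambda>_. k')"
    by blast
  show ?case
    using ray_limit_mult[OF k(2) k'(2)] Ints_mult[OF k(1) k'(1)] by blast
qed

lemma integral_vec_add: "integral_vec m \<Longrightarrow> integral_vec m' \<Longrightarrow> integral_vec (m + m')"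
  unfolding integral_vec_def by simp

lemma integral_vec_scaleR: "k \<in> \<int> \<Longrightarrow> integral_vec m \<Longrightarrow> integral_vec (k *\<^sub>R m)"
  unfolding integral_vec_def by simp

lemma LIdeal_ray_slope_integral:
  assumes cones: "\<And>\<sigma>. \<sigma> \<in> \<Sigma> \<Longrightarrow> conic \<sigma>" and "a \<in> LIdeal \<Sigma>"
  shows "\<exists>M. integral_vec M \<and> ray_slope (support \<Sigma>) a (\<lambda>x. M \<bullet> x)"
  using \<open>a \<in> LIdeal \<Sigma>\<close>
proof induction
  case zero
  show ?case
    by (intro exI[of _ 0]) (simp add: integral_vec_def ray_slope_def)
next
  case (gen l)
  then obtain m where m: "integral_vec m" "\<forall>x\<in>support \<Sigma>. l x = m \<bullet> x"
    unfolding L_def by blast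
  have "ray_slope (support \<Sigma>) (\<lambda>x. expfun \<Sigma> l x - restr \<Sigma> (\<lambda>_. 1) x) l"
    using ray_slope_expfun_minus_one[OF cones] gen L_subset_PL by blast
  then show ?case
    using m unfolding ray_slope_def by auto
next
  case (add a b)
  then obtain M M' where M: "integral_vec M" "ray_slope (support \<Sigma>) a (\<lambda>x. M \<bullet> x)"
    and M': "integral_vec M'" "ray_slope (support \<Sigma>) b (\<lambda>x. M' \<bullet> x)"
    by blast
  have "ray_slope (support \<Sigma>) (\<lambda>x. a x + b x) (\<lambda>x. (M + M') \<bullet> x)"
    using ray_slope_add[OF M(2) M'(2)] by (simp add: inner_add_left)
  then show ?case
    using integral_vec_add[OF M(1) M'(1)] by blast
next
  case (mul r a)
  obtain k where k: "k \<in> \<int>" "ray_limit (support \<Sigma>) r (\<lambda>_. k)"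
    using PE_ray_limit_Ints[OF cones mul(1)] by blast
  obtain M where M: "integral_vec M" "ray_slope (support \<Sigma>) a (\<lambda>x. M \<bullet> x)"
    using mul(3) by blast
  have "ray_slope (support \<Sigma>) (\<lambda>x. r x * a x) (\<lambda>x. (k *\<^sub>R M) \<bullet> x)"
    using ray_slope_mult[OF k(2) M(2)] by simp
  then show ?case
    using integral_vec_scaleR[OF k(1) M(1)] by blast
qed
theorem lemma2:
  fixes \<Sigma> :: "(real^'n) set set" and f :: "real^'n \<Rightarrow> real"
  assumes "rational_fan \<Sigma>" and "f \<in> PL \<Sigma>"
  shows "class_is_one \<Sigma> f \<longleftrightarrow> f \<in> L \<Sigma>"
proof
  assume "f \<in> L \<Sigma>"
  then show "class_is_one \<Sigma> f"
    unfolding class_is_one_def by (rule LIdeal.gen)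
next
  assume "class_is_one \<Sigma> f"
  have cones: "\<And>\<sigma>. \<sigma> \<in> \<Sigma> \<Longrightarrow> conic \<sigma>"
    using assms(1) unfolding rational_fan_def by (blast intro: conic_rational_polyhedral_cone)
  obtain M where M: "integral_vec M"
    "ray_slope (support \<Sigma>) (\<lambda>x. expfun \<Sigma> f x - restr \<Sigma> (\<lambda>_. 1) x) (\<lambda>x. M \<bullet> x)"
    using LIdeal_ray_slope_integral[OF cones] \<open>class_is_one \<Sigma> f\<close>
    unfolding class_is_one_def by blast
  have "\<forall>x\<in>support \<Sigma>. f x = M \<bullet> x"
    using ray_slope_unique[OF ray_slope_expfun_minus_one[OF cones assms(2)] M(2)] by blast
  then show "f \<in> L \<Sigma>"
    unfolding L_def using M(1) by blast
qed

end
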